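(* Let $W^{(1)}$ be a pro-$p$ Coxeter group (notation as in the context) and let $M$ be a group (not necessarily commutative) endowed with an action of $W^{(1)}$ by group automorphisms, written $(g,m)\mapsto g(m)$. For a group $G$ acting on $M$ let $Z^1(G,M)$ be the set of maps $\phi:G\to M$ with $\phi(gg')=\phi(g)\,g(\phi(g'))$ for all $g,g'\in G$. Then the restriction map \[ Z^1(W^{(1)},M)\longrightarrow \mathrm{Hom}_{\mathrm{Set}}(S,M)\times Z^1(\Omega^{(1)},M),\qquad \phi\mapsto \big((s\mapsto \phi(n_s)),\ (u\mapsto\phi(u))\big) \] is injective, and its image consists exactly of the pairs $(\sigma,\rho)$ satisfying: (i) $\sigma(s)\, n_s(\sigma(s))=\rho(n_s^2)$ for all $s\in S$ (note $n_s^2\in T\subseteq\Omega^{(1)}$); (ii) for all $u\in\Omega^{(1)}$ and $s\in S$, \[ \rho(u)\cdot u(\sigma(s))=\sigma(u(s))\cdot n_{u(s)}\big(\rho(u\,t_{s,u})\big), \] where $u(s):=\pi(u)s\pi(u)^{-1}\in S$ and $t_{s,u}\in T$ is the element defined by $u n_s=n_{u(s)}\,u\,t_{s,u}$; (iii) for all $s,t\in S$ with $m(s,t)<\infty$, the following two products, each with $m(s,t)$ factors, are equal: \[ \sigma(s)\cdot n_s(\sigma(t))\cdot (n_sn_t)(\sigma(s))\cdot(n_sn_tn_s)(\sigma(t))\cdots = \sigma(t)\cdot n_t(\sigma(s))\cdot(n_tn_s)(\sigma(t))\cdot(n_tn_sn_t)(\sigma(s))\cdots . \]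
   Context: A Coxeter group $(W_{\mathrm{aff}},S)$ has length function $\ell$ with respect to $S$, and $m(s,t)\in\{1,2,\dots,\infty\}$ denotes the order of $st$. An extended Coxeter group is a group $W=W_{\mathrm{aff}}\rtimes\Omega$ where $W_{\mathrm{aff}}$ is a normal subgroup, $(W_{\mathrm{aff}},S)$ is a Coxeter group, and $\Omega\le W$ is a subgroup whose conjugation action on $W_{\mathrm{aff}}$ preserves $S$; the length is extended to $W$ by $\ell(wu)=\ell(w)$ for $w\in W_{\mathrm{aff}},u\in\Omega$. A pro-$p$ Coxeter group $W^{(1)}$ consists of an extended Coxeter group $W$, an abelian group $T$, a group extension $1\to T\to W^{(1)}\xrightarrow{\pi}W\to1$ (with $T\subseteq W^{(1)}$), and elements $n_s\in\pi^{-1}(s)$ for $s\in S$ satisfying the braid relations $n_sn_tn_s\cdots=n_tn_sn_t\cdots$ ($m(s,t)$ factors on each side) whenever $m(s,t)<\infty$. We write $\Omega^{(1)}:=\pi^{-1}(\Omega)$. *)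

theory Defs
  imports "HOL-Algebra.Algebra"
begin

definition mprod :: "('a, 'b) monoid_scheme \<Rightarrow> 'a list \<Rightarrow> 'a" where
  "mprod G xs = foldr (\<lambda>x y. x \<otimes>\<^bsub>G\<^esub> y) xs \<one>\<^bsub>G\<^esub>"

fun alt :: "'a \<Rightarrow> 'a \<Rightarrow> nat \<Rightarrow> 'a list" where
  "alt s t 0 = []"
| "alt s t (Suc k) = s # alt t s k"

text \<open>m(s,t) = order of s t; the value 0 encodes infinity (convention of group.ord).\<close>
definition mcox :: "('a, 'b) monoid_scheme \<Rightarrow> 'a \<Rightarrow> 'a \<Rightarrow> nat" where
  "mcox G s t = group.ord G (s \<otimes>\<^bsub>G\<^esub> t)"

text \<open>Congruence on words in S generated by the Coxeter relations
  s s = 1 and the braid relations (m(s,t) factors each side, m(s,t) finite).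
  Together with s^2 = 1 this is the Coxeter presentation.\<close>
inductive cox_equiv :: "('a, 'b) monoid_scheme \<Rightarrow> 'a set \<Rightarrow> 'a list \<Rightarrow> 'a list \<Rightarrow> bool"
  for G S where
  refl: "cox_equiv G S w w"
| sym: "cox_equiv G S u v \<Longrightarrow> cox_equiv G S v u"
| trans: "cox_equiv G S u v \<Longrightarrow> cox_equiv G S v w \<Longrightarrow> cox_equiv G S u w"
| del: "s \<in> S \<Longrightarrow> cox_equiv G S (u @ [s, s] @ v) (u @ v)"
| braid: "s \<in> S \<Longrightarrow> t \<in> S \<Longrightarrow> mcox G s t \<noteq> 0 \<Longrightarrow>
     cox_equiv G S (u @ alt s t (mcox G s t) @ v) (u @ alt t s (mcox G s t) @ v)"

text \<open>(G,S) is a Coxeter system: S generates G and G has the presentation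
  < S | (s t)^{m(s,t)} = 1 >, i.e. two words in S have the same product in G
  iff they are related by the defining relations.\<close>
definition coxeter_system :: "('a, 'b) monoid_scheme \<Rightarrow> 'a set \<Rightarrow> bool" where
  "coxeter_system G S \<longleftrightarrow> group G \<and> S \<subseteq> carrier G \<and> generate G S = carrier G \<and>
     (\<forall>u v. set u \<subseteq> S \<longrightarrow> set v \<subseteq> S \<longrightarrow> (mprod G u = mprod G v \<longleftrightarrow> cox_equiv G S u v))"

definition ext_coxeter :: "('a, 'b) monoid_scheme \<Rightarrow> 'a set \<Rightarrow> 'a set \<Rightarrow> 'a set \<Rightarrow> bool" where
  "ext_coxeter W Waff S \<Omega> \<longleftrightarrow> group W \<and> Waff \<lhd> W \<and> subgroup \<Omega> W \<and>
     Waff \<inter> \<Omega> = {\<one>\<^bsub>W\<^esub>} \<and> Waff <#>\<^bsub>W\<^esub> \<Omega> = carrier W \<and>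
     coxeter_system (W\<lparr>carrier := Waff\<rparr>) S \<and>
     (\<forall>u\<in>\<Omega>. \<forall>s\<in>S. u \<otimes>\<^bsub>W\<^esub> s \<otimes>\<^bsub>W\<^esub> inv\<^bsub>W\<^esub> u \<in> S)"

definition pro_p_coxeter ::
  "('g, 'c) monoid_scheme \<Rightarrow> ('w, 'd) monoid_scheme \<Rightarrow> 'w set \<Rightarrow> 'w set \<Rightarrow> 'w set \<Rightarrow>
   'g set \<Rightarrow> ('g \<Rightarrow> 'w) \<Rightarrow> ('w \<Rightarrow> 'g) \<Rightarrow> bool" where
  "pro_p_coxeter W1 W Waff S \<Omega> T \<pi> n \<longleftrightarrow>
     ext_coxeter W Waff S \<Omega> \<and> group W1 \<and>
     subgroup T W1 \<and> (\<forall>x\<in>T. \<forall>y\<in>T. x \<otimes>\<^bsub>W1\<^esub> y = y \<otimes>\<^bsub>W1\<^esub> x) \<and>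
     \<pi> \<in> hom W1 W \<and> \<pi> ` carrier W1 = carrier W \<and> kernel W1 W \<pi> = T \<and>
     (\<forall>s\<in>S. n s \<in> carrier W1 \<and> \<pi> (n s) = s) \<and>
     (\<forall>s\<in>S. \<forall>t\<in>S. mcox W s t \<noteq> 0 \<longrightarrow>
        mprod W1 (map n (alt s t (mcox W s t))) = mprod W1 (map n (alt t s (mcox W s t))))"

definition aut_action :: "('g, 'c) monoid_scheme \<Rightarrow> ('m, 'e) monoid_scheme \<Rightarrow> ('g \<Rightarrow> 'm \<Rightarrow> 'm) \<Rightarrow> bool" where
  "aut_action G M act \<longleftrightarrow>
     (\<forall>g\<in>carrier G. act g \<in> iso M M) \<and>
     (\<forall>m\<in>carrier M. act \<one>\<^bsub>G\<^esub> m = m) \<and>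
     (\<forall>g\<in>carrier G. \<forall>h\<in>carrier G. \<forall>m\<in>carrier M. act (g \<otimes>\<^bsub>G\<^esub> h) m = act g (act h m))"

definition Z1 :: "('g, 'c) monoid_scheme \<Rightarrow> 'g set \<Rightarrow> ('m, 'e) monoid_scheme \<Rightarrow> ('g \<Rightarrow> 'm \<Rightarrow> 'm) \<Rightarrow> ('g \<Rightarrow> 'm) set" where
  "Z1 G H M act = {\<phi> \<in> H \<rightarrow>\<^sub>E carrier M.
     \<forall>g\<in>H. \<forall>g'\<in>H. \<phi> (g \<otimes>\<^bsub>G\<^esub> g') = \<phi> g \<otimes>\<^bsub>M\<^esub> act g (\<phi> g')}"

end

theory Submission
  imports Defs
begin

text \<open>
  As W is the semidirect product of W_aff and \<Omega>, and W_aff is generated by S, every element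
  of W1 factors as n_w u with w a word in S and u \<in> \<Omega>1. The cocycle identity forces
  \<phi>(n_w u) = \<sigma>(w) n_w(\<rho>(u)), where \<sigma>(s w) = \<sigma>(s) n_s(\<sigma>(w)) and \<sigma>([]) = 1.
  This proves injectivity, and conditions (i)-(iii) are the cocycle identity evaluated on
  n_s n_s, on u n_s = n_u(s) (u t_s,u) and on the braid relations.

  Conversely, take the displayed formula as the definition of \<phi>. If n_w u = n_w' u', then
  w and w' have the same image in W_aff because W_aff \<inter> \<Omega> = 1, so they are related by the
  Coxeter presentation; the value is invariant under a braid move by (iii) and under
  deleting a square s s by (i) and (ii). Condition (ii), propagated along a word, gives
  \<rho>(u) u(\<phi>(n_w u')) = \<phi>(u n_w u'), which is exactly what the cocycle identity for \<phi>
  requires.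
\<close>

lemma mprod_Nil [simp]: "mprod G [] = \<one>\<^bsub>G\<^esub>"
  by (simp add: mprod_def)

lemma mprod_Cons [simp]: "mprod G (x # xs) = x \<otimes>\<^bsub>G\<^esub> mprod G xs"
  by (simp add: mprod_def)

lemma (in monoid) mprod_closed [intro, simp]: "set xs \<subseteq> carrier G \<Longrightarrow> mprod G xs \<in> carrier G"
  by (induction xs) auto

lemma (in monoid) mprod_append:
  "set xs \<subseteq> carrier G \<Longrightarrow> set ys \<subseteq> carrier G \<Longrightarrow> mprod G (xs @ ys) = mprod G xs \<otimes> mprod G ys"
  by (induction xs) (auto simp: m_assoc)

lemma (in group_hom) hom_mprod:
  "set xs \<subseteq> carrier G \<Longrightarrow> h (mprod G xs) = mprod H (map h xs)"
  by (induction xs) (auto simp: G.mprod_closed)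

lemma (in group) complement_factor_unique:
  assumes "subgroup A G" "subgroup B G" "A \<inter> B = {\<one>}"
    and "a \<in> A" "a' \<in> A" "x \<in> B" "x' \<in> B" "a \<otimes> x = a' \<otimes> x'"
  shows "a = a'"
proof -
  have carr: "a \<in> carrier G" "a' \<in> carrier G" "x \<in> carrier G" "x' \<in> carrier G"
    using assms by (auto dest: subgroup.mem_carrier)
  have "inv a' \<otimes> a = inv a' \<otimes> (a \<otimes> x) \<otimes> inv x"
    using carr by (simp add: m_assoc)
  also have "\<dots> = x' \<otimes> inv x"
    using carr by (simp only: assms(8)) (simp add: m_assoc[symmetric])
  finally have "inv a' \<otimes> a = x' \<otimes> inv x" .
  moreover have "inv a' \<otimes> a \<in> A" "x' \<otimes> inv x \<in> B"
    using assms by (auto intro: subgroup.m_closed subgroup.m_inv_closed)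
  ultimately have "inv a' \<otimes> a = \<one>"
    using assms(3) by auto
  then show ?thesis
    using carr inv_solve_left'[of \<one> a' a] by simp
qed

lemma Z1_closed: "\<phi> \<in> Z1 G H M act \<Longrightarrow> g \<in> H \<Longrightarrow> \<phi> g \<in> carrier M"
  by (auto simp: Z1_def)

lemma Z1_mult:
  "\<phi> \<in> Z1 G H M act \<Longrightarrow> g \<in> H \<Longrightarrow> g' \<in> H \<Longrightarrow>
   \<phi> (g \<otimes>\<^bsub>G\<^esub> g') = \<phi> g \<otimes>\<^bsub>M\<^esub> act g (\<phi> g')"
  by (simp add: Z1_def)

lemma alt_length [simp]: "length (alt s t k) = k"
  by (induction k arbitrary: s t) auto

lemma set_alt_subset: "s \<in> S \<Longrightarrow> t \<in> S \<Longrightarrow> set (alt s t k) \<subseteq> S"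
  by (induction k arbitrary: s t) auto

lemma cox_equiv_set_subset:
  "cox_equiv G S u v \<Longrightarrow> set u \<subseteq> S \<longleftrightarrow> set v \<subseteq> S"
proof (induction rule: cox_equiv.induct)
  case (braid s t u v)
  then show ?case
    using set_alt_subset[of s S t] set_alt_subset[of t S s] by auto
qed auto

context
  fixes G (structure) and S
  assumes cox: "coxeter_system G S"
begin

interpretation group G
  using cox by (simp add: coxeter_system_def)

lemma coxeter_generators_subset: "S \<subseteq> carrier G"
  using cox by (simp add: coxeter_system_def)

lemma coxeter_eq_iff_cox_equiv:
  "set u \<subseteq> S \<Longrightarrow> set v \<subseteq> S \<Longrightarrow> mprod G u = mprod G v \<longleftrightarrow> cox_equiv G S u v"
  using cox by (simp add: coxeter_system_def)

lemma coxeter_generator_square: "s \<in> S \<Longrightarrow> s \<otimes> s = \<one>"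
  using coxeter_eq_iff_cox_equiv[of "[s, s]" "[]"] cox_equiv.del[of s S G "[]" "[]"]
    coxeter_generators_subset by auto

lemma coxeter_word_exists: "a \<in> carrier G \<Longrightarrow> \<exists>w. set w \<subseteq> S \<and> mprod G w = a"
proof -
  assume "a \<in> carrier G"
  then have "a \<in> generate G S"
    using cox by (simp add: coxeter_system_def)
  then show ?thesis
  proof (induction rule: generate.induct)
    case one
    show ?case by (intro exI[of _ "[]"]) simp
  next
    case (incl h)
    then show ?case
      using coxeter_generators_subset by (intro exI[of _ "[h]"]) auto
  next
    case (inv h)
    then have "inv h = h"
      using coxeter_generators_subset coxeter_generator_square by (auto intro: inv_equality)
    then show ?case
      using inv coxeter_generators_subset by (intro exI[of _ "[h]"]) auto
  next
    case (eng h1 h2)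
    then obtain w1 w2 where "set w1 \<subseteq> S" "mprod G w1 = h1" "set w2 \<subseteq> S" "mprod G w2 = h2"
      by blast
    then show ?case
      using coxeter_generators_subset by (intro exI[of _ "w1 @ w2"]) (auto simp: mprod_append)
  qed
qed

end

locale pro_p_coxeter_action =
  fixes W1 :: "('g, 'c) monoid_scheme" and W :: "('w, 'd) monoid_scheme"
    and Waff S \<Omega> :: "'w set" and T :: "'g set"
    and \<pi> :: "'g \<Rightarrow> 'w" and n :: "'w \<Rightarrow> 'g"
    and M :: "('m, 'e) monoid_scheme" and act :: "'g \<Rightarrow> 'm \<Rightarrow> 'm"
  assumes pro_p: "pro_p_coxeter W1 W Waff S \<Omega> T \<pi> n"
    and group_M: "group M"
    and action: "aut_action W1 M act"
begin

sublocale W1: group W1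
  using pro_p by (simp add: pro_p_coxeter_def)

sublocale W: group W
  using pro_p by (simp add: pro_p_coxeter_def ext_coxeter_def)

sublocale M: group M
  using group_M .

sublocale pi: group_hom W1 W \<pi>
  using pro_p by (simp add: pro_p_coxeter_def group_hom_def group_hom_axioms_def)

abbreviation Waff_group :: "('w, 'd) monoid_scheme" where "Waff_group \<equiv> W\<lparr>carrier := Waff\<rparr>"

lemma Waff_subgroup: "subgroup Waff W"
  and Omega_subgroup: "subgroup \<Omega> W"
  and Waff_Omega_inter: "Waff \<inter> \<Omega> = {\<one>\<^bsub>W\<^esub>}"
  and Waff_Omega_product: "Waff <#>\<^bsub>W\<^esub> \<Omega> = carrier W"
  and coxeter_Waff: "coxeter_system Waff_group S"
  and Omega_conj_S: "\<lbrakk>x \<in> \<Omega>; s \<in> S\<rbrakk> \<Longrightarrow> x \<otimes>\<^bsub>W\<^esub> s \<otimes>\<^bsub>W\<^esub> inv\<^bsub>W\<^esub> x \<in> S"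
  and n_closed [simp]: "s \<in> S \<Longrightarrow> n s \<in> carrier W1"
  and pi_n [simp]: "s \<in> S \<Longrightarrow> \<pi> (n s) = s"
  and braid_n: "\<lbrakk>s \<in> S; t \<in> S; mcox W s t \<noteq> 0\<rbrakk> \<Longrightarrow>
     mprod W1 (map n (alt s t (mcox W s t))) = mprod W1 (map n (alt t s (mcox W s t)))"
  using pro_p by (auto simp: pro_p_coxeter_def ext_coxeter_def normal_imp_subgroup)

lemma S_subset_Waff: "S \<subseteq> Waff"
  using coxeter_generators_subset[OF coxeter_Waff] by simp

lemma S_closed [simp]: "s \<in> S \<Longrightarrow> s \<in> carrier W"
  using S_subset_Waff subgroup.mem_carrier[OF Waff_subgroup] by blast

lemma Omega_closed [simp]: "x \<in> \<Omega> \<Longrightarrow> x \<in> carrier W"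
  using subgroup.mem_carrier[OF Omega_subgroup] .

lemma mprod_Waff_group [simp]: "mprod Waff_group w = mprod W w"
  by (simp add: mprod_def)

lemma mcox_Waff_group [simp]: "mcox Waff_group s t = mcox W s t"
  using coxeter_Waff
  by (simp add: mcox_def coxeter_system_def group.ord_def W.ord_def nat_pow_def)

lemma mprod_word_closed [simp]: "set w \<subseteq> S \<Longrightarrow> mprod W w \<in> carrier W"
  by (induction w) auto

lemma mprod_word_in_Waff: "set w \<subseteq> S \<Longrightarrow> mprod W w \<in> Waff"
  using S_subset_Waff Waff_subgroup
  by (induction w) (auto intro: subgroup.m_closed subgroup.one_closed)

lemma generator_square [simp]: "s \<in> S \<Longrightarrow> s \<otimes>\<^bsub>W\<^esub> s = \<one>\<^bsub>W\<^esub>"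
  using coxeter_generator_square[OF coxeter_Waff] by simp

section \<open>Lifted words and the decomposition of W1\<close>

abbreviation nword :: "'w list \<Rightarrow> 'g" where
  "nword w \<equiv> mprod W1 (map n w)"

lemma nword_closed [simp]: "set w \<subseteq> S \<Longrightarrow> nword w \<in> carrier W1"
  by (intro W1.mprod_closed) auto

lemma nword_append:
  assumes "set a \<subseteq> S" "set b \<subseteq> S"
  shows "nword (a @ b) = nword a \<otimes>\<^bsub>W1\<^esub> nword b"
proof -
  have "set (map n a) \<subseteq> carrier W1" "set (map n b) \<subseteq> carrier W1"
    using assms by auto
  then show ?thesis
    by (simp add: W1.mprod_append)
qed

lemma pi_nword [simp]: "set w \<subseteq> S \<Longrightarrow> \<pi> (nword w) = mprod W w"
  by (induction w) auto

definition Omega1 :: "'g set" where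
  "Omega1 = {g \<in> carrier W1. \<pi> g \<in> \<Omega>}"

lemma Omega1_iff: "u \<in> Omega1 \<longleftrightarrow> u \<in> carrier W1 \<and> \<pi> u \<in> \<Omega>"
  by (simp add: Omega1_def)

lemma Omega1_closed [simp]: "u \<in> Omega1 \<Longrightarrow> u \<in> carrier W1"
  by (simp add: Omega1_def)

lemma Omega1_one [simp]: "\<one>\<^bsub>W1\<^esub> \<in> Omega1"
  and Omega1_mult [simp]: "u \<in> Omega1 \<Longrightarrow> v \<in> Omega1 \<Longrightarrow> u \<otimes>\<^bsub>W1\<^esub> v \<in> Omega1"
  using Omega_subgroup
  by (simp_all add: Omega1_iff subgroup.one_closed subgroup.m_closed)

lemma kernel_subset_Omega1: "g \<in> carrier W1 \<Longrightarrow> \<pi> g = \<one>\<^bsub>W\<^esub> \<Longrightarrow> g \<in> Omega1"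
  unfolding Omega1_def using subgroup.one_closed[OF Omega_subgroup] by auto

lemma Omega1_decomposition:
  assumes "g \<in> carrier W1"
  obtains w u where "set w \<subseteq> S" "u \<in> Omega1" "g = nword w \<otimes>\<^bsub>W1\<^esub> u"
proof -
  have "\<pi> g \<in> Waff <#>\<^bsub>W\<^esub> \<Omega>"
    using pi.hom_closed[OF assms] Waff_Omega_product by simp
  then obtain a x where a: "a \<in> Waff" and x: "x \<in> \<Omega>" and pg: "\<pi> g = a \<otimes>\<^bsub>W\<^esub> x"
    unfolding set_mult_def by blast
  obtain w where w: "set w \<subseteq> S" "mprod W w = a"
    using coxeter_word_exists[OF coxeter_Waff, of a] a by auto
  have a_closed: "a \<in> carrier W"
    using a subgroup.mem_carrier[OF Waff_subgroup] by blast
  define u where "u = inv\<^bsub>W1\<^esub> (nword w) \<otimes>\<^bsub>W1\<^esub> g"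
  have "\<pi> u = inv\<^bsub>W\<^esub> a \<otimes>\<^bsub>W\<^esub> (a \<otimes>\<^bsub>W\<^esub> x)"
    using assms w by (simp add: u_def pg)
  also have "\<dots> = x"
    using a_closed x by (simp add: W.m_assoc[symmetric])
  finally have "\<pi> u = x" .
  moreover have "u \<in> carrier W1"
    using assms w by (simp add: u_def)
  ultimately have "u \<in> Omega1"
    using x by (simp add: Omega1_iff)
  moreover have "g = nword w \<otimes>\<^bsub>W1\<^esub> u"
    using assms w by (simp add: u_def W1.m_assoc[symmetric])
  ultimately show ?thesis
    using that w by blast
qed

lemma nword_Omega1_eq_imp_cox_equiv:
  assumes "set w \<subseteq> S" "set w' \<subseteq> S" "u \<in> Omega1" "u' \<in> Omega1"
    and "nword w \<otimes>\<^bsub>W1\<^esub> u = nword w' \<otimes>\<^bsub>W1\<^esub> u'"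
  shows "cox_equiv Waff_group S w w'"
proof -
  have "\<pi> (nword w \<otimes>\<^bsub>W1\<^esub> u) = \<pi> (nword w' \<otimes>\<^bsub>W1\<^esub> u')"
    using assms(5) by simp
  then have "mprod W w \<otimes>\<^bsub>W\<^esub> \<pi> u = mprod W w' \<otimes>\<^bsub>W\<^esub> \<pi> u'"
    using assms(1-4) by simp
  then have "mprod W w = mprod W w'"
    using W.complement_factor_unique[OF Waff_subgroup Omega_subgroup Waff_Omega_inter]
      mprod_word_in_Waff assms by (auto simp: Omega1_iff)
  then show ?thesis
    using coxeter_eq_iff_cox_equiv[OF coxeter_Waff] assms by simp
qed

lemma Omega1_transfer:
  assumes "set w \<subseteq> S" "set w' \<subseteq> S" "mprod W w = mprod W w'" "u \<in> Omega1"
  shows "inv\<^bsub>W1\<^esub> (nword w') \<otimes>\<^bsub>W1\<^esub> nword w \<otimes>\<^bsub>W1\<^esub> u \<in> Omega1"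
proof -
  have "\<pi> (inv\<^bsub>W1\<^esub> (nword w') \<otimes>\<^bsub>W1\<^esub> nword w \<otimes>\<^bsub>W1\<^esub> u)
      = inv\<^bsub>W\<^esub> (mprod W w') \<otimes>\<^bsub>W\<^esub> mprod W w \<otimes>\<^bsub>W\<^esub> \<pi> u"
    using assms(1,2,4) by simp
  also have "\<dots> = \<pi> u"
    using assms(2,3,4) by simp
  finally show ?thesis
    using assms(1,2,4) unfolding Omega1_iff by simp
qed

lemma act_group_hom: "g \<in> carrier W1 \<Longrightarrow> group_hom M M (act g)"
  using action group_M by (simp add: aut_action_def iso_def group_hom_def group_hom_axioms_def)

lemma act_closed [simp]: "g \<in> carrier W1 \<Longrightarrow> x \<in> carrier M \<Longrightarrow> act g x \<in> carrier M"
  using group_hom.hom_closed[OF act_group_hom] .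

lemma act_mult [simp]:
  "g \<in> carrier W1 \<Longrightarrow> x \<in> carrier M \<Longrightarrow> y \<in> carrier M \<Longrightarrow>
   act g (x \<otimes>\<^bsub>M\<^esub> y) = act g x \<otimes>\<^bsub>M\<^esub> act g y"
  using group_hom.hom_mult[OF act_group_hom] .

lemma act_one [simp]: "g \<in> carrier W1 \<Longrightarrow> act g \<one>\<^bsub>M\<^esub> = \<one>\<^bsub>M\<^esub>"
  using group_hom.hom_one[OF act_group_hom] .

lemma act_by_one [simp]: "x \<in> carrier M \<Longrightarrow> act \<one>\<^bsub>W1\<^esub> x = x"
  using action by (simp add: aut_action_def)

lemma act_act:
  "g \<in> carrier W1 \<Longrightarrow> h \<in> carrier W1 \<Longrightarrow> x \<in> carrier M \<Longrightarrow>
   act (g \<otimes>\<^bsub>W1\<^esub> h) x = act g (act h x)"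
  using action by (simp add: aut_action_def)

lemma Z1_one:
  assumes "\<phi> \<in> Z1 W1 H M act" "\<one>\<^bsub>W1\<^esub> \<in> H"
  shows "\<phi> \<one>\<^bsub>W1\<^esub> = \<one>\<^bsub>M\<^esub>"
proof -
  have "\<phi> \<one>\<^bsub>W1\<^esub> \<otimes>\<^bsub>M\<^esub> \<phi> \<one>\<^bsub>W1\<^esub> = \<phi> \<one>\<^bsub>W1\<^esub>"
    using Z1_mult[OF assms(1,2,2)] Z1_closed[OF assms] by simp
  then show ?thesis
    using Z1_closed[OF assms] by simp
qed

fun sigma_word :: "('w \<Rightarrow> 'm) \<Rightarrow> 'w list \<Rightarrow> 'm" where
  "sigma_word \<sigma> [] = \<one>\<^bsub>M\<^esub>"
| "sigma_word \<sigma> (s # w) = \<sigma> s \<otimes>\<^bsub>M\<^esub> act (n s) (sigma_word \<sigma> w)"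

lemma sigma_word_closed [simp]:
  "\<sigma> \<in> S \<rightarrow> carrier M \<Longrightarrow> set w \<subseteq> S \<Longrightarrow> sigma_word \<sigma> w \<in> carrier M"
  by (induction w) auto

lemma sigma_word_append:
  "\<sigma> \<in> S \<rightarrow> carrier M \<Longrightarrow> set a \<subseteq> S \<Longrightarrow> set b \<subseteq> S \<Longrightarrow>
   sigma_word \<sigma> (a @ b) = sigma_word \<sigma> a \<otimes>\<^bsub>M\<^esub> act (nword a) (sigma_word \<sigma> b)"
  by (induction a) (auto simp: M.m_assoc act_act Pi_iff)

lemma sigma_word_eq_mprod:
  assumes "\<sigma> \<in> S \<rightarrow> carrier M" "set w \<subseteq> S"
  shows "sigma_word \<sigma> w = mprod M (map (\<lambda>k. act (nword (take k w)) (\<sigma> (w ! k))) [0..<length w])"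
  using assms(2)
proof (induction w)
  case (Cons s w)
  define f where "f k = act (nword (take k w)) (\<sigma> (w ! k))" for k
  define F where "F k = act (nword (take k (s # w))) (\<sigma> ((s # w) ! k))" for k
  have take_S: "set (take k w) \<subseteq> S" for k
    using Cons.prems set_take_subset by fastforce
  have nth_closed: "\<sigma> (w ! k) \<in> carrier M" if "k < length w" for k
    using assms(1) Cons.prems nth_mem[OF that] by auto
  have f_closed: "set (map f [0..<length w]) \<subseteq> carrier M"
    using take_S nth_closed by (auto simp: f_def)
  have "map F [0..<length (s # w)] = F 0 # map (\<lambda>k. F (Suc k)) [0..<length w]"
    by (simp only: length_Cons map_Suc_upt[symmetric] upt_conv_Cons[OF zero_less_Suc] list.map map_map comp_def)
  also have "map (\<lambda>k. F (Suc k)) [0..<length w] = map (act (n s)) (map f [0..<length w])"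
    using Cons.prems take_S nth_closed by (simp add: F_def f_def act_act)
  also have "F 0 = \<sigma> s"
    using assms(1) Cons.prems by (simp add: F_def Pi_iff)
  finally have "mprod M (map F [0..<length (s # w)])
      = \<sigma> s \<otimes>\<^bsub>M\<^esub> mprod M (map (act (n s)) (map f [0..<length w]))"
    by (simp only: mprod_Cons)
  also have "\<dots> = \<sigma> s \<otimes>\<^bsub>M\<^esub> act (n s) (sigma_word \<sigma> w)"
    using Cons group_hom.hom_mprod[OF act_group_hom[of "n s"] f_closed] by (simp add: f_def[abs_def])
  finally show ?case
    by (simp only: F_def[abs_def] sigma_word.simps)
qed simp

text \<open>In the paper's notation, gen_conj u s = u(s) and slide u s = u t_s,u.\<close>

definition gen_conj :: "'g \<Rightarrow> 'w \<Rightarrow> 'w" where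
  "gen_conj u s = \<pi> u \<otimes>\<^bsub>W\<^esub> s \<otimes>\<^bsub>W\<^esub> inv\<^bsub>W\<^esub> (\<pi> u)"

definition slide :: "'g \<Rightarrow> 'w \<Rightarrow> 'g" where
  "slide u s = inv\<^bsub>W1\<^esub> (n (gen_conj u s)) \<otimes>\<^bsub>W1\<^esub> u \<otimes>\<^bsub>W1\<^esub> n s"

lemma gen_conj_in_S [simp]: "u \<in> Omega1 \<Longrightarrow> s \<in> S \<Longrightarrow> gen_conj u s \<in> S"
  unfolding gen_conj_def Omega1_iff using Omega_conj_S by blast

lemma mult_n_eq_n_slide:
  "u \<in> Omega1 \<Longrightarrow> s \<in> S \<Longrightarrow> u \<otimes>\<^bsub>W1\<^esub> n s = n (gen_conj u s) \<otimes>\<^bsub>W1\<^esub> slide u s"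
  by (simp add: slide_def W1.m_assoc[symmetric])

lemma pi_slide:
  assumes "u \<in> Omega1" "s \<in> S"
  shows "\<pi> (slide u s) = \<pi> u"
proof -
  have "gen_conj u s \<otimes>\<^bsub>W\<^esub> \<pi> (slide u s) = \<pi> u \<otimes>\<^bsub>W\<^esub> s"
    using arg_cong[OF mult_n_eq_n_slide[OF assms], of \<pi>] assms by (simp add: slide_def)
  also have "\<dots> = gen_conj u s \<otimes>\<^bsub>W\<^esub> \<pi> u"
    using assms by (simp add: gen_conj_def W.m_assoc)
  finally show ?thesis
    using assms by (simp add: slide_def)
qed

lemma slide_in_Omega1 [simp]:
  assumes "u \<in> Omega1" "s \<in> S"
  shows "slide u s \<in> Omega1"
proof -
  have "slide u s \<in> carrier W1"
    using assms by (simp add: slide_def)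
  then show ?thesis
    using assms pi_slide[OF assms] by (simp add: Omega1_iff)
qed

lemma gen_conj_slide [simp]: "u \<in> Omega1 \<Longrightarrow> s \<in> S \<Longrightarrow> gen_conj (slide u s) = gen_conj u"
  by (simp add: gen_conj_def pi_slide fun_eq_iff)

abbreviation conj_word :: "'g \<Rightarrow> 'w list \<Rightarrow> 'w list" where
  "conj_word u w \<equiv> map (gen_conj u) w"

lemma conj_word_subset: "u \<in> Omega1 \<Longrightarrow> set w \<subseteq> S \<Longrightarrow> set (conj_word u w) \<subseteq> S"
  by auto

lemma conj_word_kernel: "\<pi> u = \<one>\<^bsub>W\<^esub> \<Longrightarrow> set w \<subseteq> S \<Longrightarrow> conj_word u w = w"
  by (induction w) (auto simp: gen_conj_def)

lemma Omega1_pass_word: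
  assumes "u \<in> Omega1" "set w \<subseteq> S"
  obtains v where "v \<in> Omega1" "u \<otimes>\<^bsub>W1\<^esub> nword w = nword (conj_word u w) \<otimes>\<^bsub>W1\<^esub> v"
  using assms
proof (induction w arbitrary: u thesis)
  case Nil
  then show ?case
    using Nil.prems(1)[of u] by simp
next
  case (Cons s w)
  obtain v where v: "v \<in> Omega1" "slide u s \<otimes>\<^bsub>W1\<^esub> nword w = nword (conj_word u w) \<otimes>\<^bsub>W1\<^esub> v"
    using Cons.IH[of "slide u s"] Cons.prems by auto
  have "u \<otimes>\<^bsub>W1\<^esub> nword (s # w) = n (gen_conj u s) \<otimes>\<^bsub>W1\<^esub> (slide u s \<otimes>\<^bsub>W1\<^esub> nword w)"
    using Cons.prems mult_n_eq_n_slide[of u s] by (simp add: W1.m_assoc[symmetric])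
  also have "\<dots> = nword (conj_word u (s # w)) \<otimes>\<^bsub>W1\<^esub> v"
    using Cons.prems v nword_closed[OF conj_word_subset[of u w]] by (simp add: W1.m_assoc)
  finally show ?case
    using Cons.prems(1) v(1) by blast
qed

section \<open>Restriction of cocycles\<close>

definition restriction :: "('g \<Rightarrow> 'm) \<Rightarrow> ('w \<Rightarrow> 'm) \<times> ('g \<Rightarrow> 'm)" where
  "restriction \<phi> = ((\<lambda>s\<in>S. \<phi> (n s)), (\<lambda>u\<in>Omega1. \<phi> u))"

definition compatible :: "('w \<Rightarrow> 'm) \<Rightarrow> ('g \<Rightarrow> 'm) \<Rightarrow> bool" where
  "compatible \<sigma> \<rho> \<longleftrightarrow>
     \<sigma> \<in> S \<rightarrow>\<^sub>E carrier M \<and> \<rho> \<in> Z1 W1 Omega1 M act \<and>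
     (\<forall>s\<in>S. \<sigma> s \<otimes>\<^bsub>M\<^esub> act (n s) (\<sigma> s) = \<rho> (n s \<otimes>\<^bsub>W1\<^esub> n s)) \<and>
     (\<forall>u\<in>Omega1. \<forall>s\<in>S. \<rho> u \<otimes>\<^bsub>M\<^esub> act u (\<sigma> s)
        = \<sigma> (gen_conj u s) \<otimes>\<^bsub>M\<^esub> act (n (gen_conj u s)) (\<rho> (slide u s))) \<and>
     (\<forall>s\<in>S. \<forall>t\<in>S. mcox W s t \<noteq> 0 \<longrightarrow>
        sigma_word \<sigma> (alt s t (mcox W s t)) = sigma_word \<sigma> (alt t s (mcox W s t)))"

lemma compatible_iff:
  "compatible \<sigma> \<rho> \<longleftrightarrow>
     \<sigma> \<in> S \<rightarrow>\<^sub>E carrier M \<and> \<rho> \<in> Z1 W1 Omega1 M act \<and>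
     (\<forall>s\<in>S. \<sigma> s \<otimes>\<^bsub>M\<^esub> act (n s) (\<sigma> s) = \<rho> (n s \<otimes>\<^bsub>W1\<^esub> n s)) \<and>
     (\<forall>u\<in>Omega1. \<forall>s\<in>S.
        (let us = \<pi> u \<otimes>\<^bsub>W\<^esub> s \<otimes>\<^bsub>W\<^esub> inv\<^bsub>W\<^esub> (\<pi> u);
             tsu = inv\<^bsub>W1\<^esub> u \<otimes>\<^bsub>W1\<^esub> inv\<^bsub>W1\<^esub> (n us) \<otimes>\<^bsub>W1\<^esub> u \<otimes>\<^bsub>W1\<^esub> n s
         in \<rho> u \<otimes>\<^bsub>M\<^esub> act u (\<sigma> s)
              = \<sigma> us \<otimes>\<^bsub>M\<^esub> act (n us) (\<rho> (u \<otimes>\<^bsub>W1\<^esub> tsu)))) \<and>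
     (\<forall>s\<in>S. \<forall>t\<in>S. mcox W s t \<noteq> 0 \<longrightarrow>
        mprod M (map (\<lambda>k. act (mprod W1 (map n (take k (alt s t (mcox W s t)))))
                              (\<sigma> (alt s t (mcox W s t) ! k))) [0..<mcox W s t])
      = mprod M (map (\<lambda>k. act (mprod W1 (map n (take k (alt t s (mcox W s t)))))
                              (\<sigma> (alt t s (mcox W s t) ! k))) [0..<mcox W s t]))"
proof -
  have slide_eq: "u \<otimes>\<^bsub>W1\<^esub> (inv\<^bsub>W1\<^esub> u \<otimes>\<^bsub>W1\<^esub> inv\<^bsub>W1\<^esub> (n (gen_conj u s)) \<otimes>\<^bsub>W1\<^esub> u \<otimes>\<^bsub>W1\<^esub> n s) = slide u s"
    if "u \<in> Omega1" "s \<in> S" for u s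
    using that by (simp add: slide_def W1.m_assoc[symmetric])
  have braid: "sigma_word \<sigma> (alt s t k) = sigma_word \<sigma> (alt t s k) \<longleftrightarrow>
      mprod M (map (\<lambda>i. act (nword (take i (alt s t k))) (\<sigma> (alt s t k ! i))) [0..<k])
      = mprod M (map (\<lambda>i. act (nword (take i (alt t s k))) (\<sigma> (alt t s k ! i))) [0..<k])"
    if "\<sigma> \<in> S \<rightarrow>\<^sub>E carrier M" "s \<in> S" "t \<in> S" for s t k
    using that sigma_word_eq_mprod[of \<sigma> "alt s t k"] sigma_word_eq_mprod[of \<sigma> "alt t s k"]
    by (simp add: set_alt_subset PiE_iff)
  show ?thesis
    unfolding compatible_def gen_conj_def[symmetric] Let_def
    using slide_eq braid by (auto simp del: alt.simps)
qed

lemma n_square_in_Omega1 [simp]: "s \<in> S \<Longrightarrow> n s \<otimes>\<^bsub>W1\<^esub> n s \<in> Omega1"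
  by (rule kernel_subset_Omega1) simp_all

lemma cocycle_nword:
  assumes "\<phi> \<in> Z1 W1 (carrier W1) M act" "set w \<subseteq> S"
  shows "\<phi> (nword w) = sigma_word (\<lambda>s\<in>S. \<phi> (n s)) w"
  using assms(2)
  by (induction w) (simp_all add: Z1_one[OF assms(1)] Z1_mult[OF assms(1)])

lemma cocycle_decomposition:
  assumes "\<phi> \<in> Z1 W1 (carrier W1) M act" "set w \<subseteq> S" "u \<in> Omega1"
  shows "\<phi> (nword w \<otimes>\<^bsub>W1\<^esub> u) = sigma_word (\<lambda>s\<in>S. \<phi> (n s)) w \<otimes>\<^bsub>M\<^esub> act (nword w) (\<phi> u)"
  using assms by (simp add: Z1_mult cocycle_nword)

lemma restriction_inj: "inj_on restriction (Z1 W1 (carrier W1) M act)"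
proof (rule inj_onI)
  fix \<phi> \<psi>
  assume \<phi>: "\<phi> \<in> Z1 W1 (carrier W1) M act" and \<psi>: "\<psi> \<in> Z1 W1 (carrier W1) M act"
    and eq: "restriction \<phi> = restriction \<psi>"
  have on_S: "(\<lambda>s\<in>S. \<phi> (n s)) = (\<lambda>s\<in>S. \<psi> (n s))" and on_Omega1: "\<forall>u\<in>Omega1. \<phi> u = \<psi> u"
    using eq by (auto simp: restriction_def restrict_def fun_eq_iff split: if_splits)
  show "\<phi> = \<psi>"
  proof (rule extensionalityI)
    show "\<phi> \<in> extensional (carrier W1)" "\<psi> \<in> extensional (carrier W1)"
      using \<phi> \<psi> by (auto simp: Z1_def PiE_def)
  next
    fix g assume "g \<in> carrier W1"
    then obtain w u where "set w \<subseteq> S" "u \<in> Omega1" "g = nword w \<otimes>\<^bsub>W1\<^esub> u"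
      by (rule Omega1_decomposition)
    then show "\<phi> g = \<psi> g"
      using cocycle_decomposition[OF \<phi>] cocycle_decomposition[OF \<psi>] on_S on_Omega1 by simp
  qed
qed

lemma compatible_restriction:
  assumes \<phi>: "\<phi> \<in> Z1 W1 (carrier W1) M act"
  shows "compatible (\<lambda>s\<in>S. \<phi> (n s)) (\<lambda>u\<in>Omega1. \<phi> u)"
  unfolding compatible_def
proof (intro conjI ballI impI)
  show "(\<lambda>s\<in>S. \<phi> (n s)) \<in> S \<rightarrow>\<^sub>E carrier M"
    using Z1_closed[OF \<phi>] by simp
  show "(\<lambda>u\<in>Omega1. \<phi> u) \<in> Z1 W1 Omega1 M act"
    using Z1_closed[OF \<phi>] Z1_mult[OF \<phi>] by (simp add: Z1_def)
next
  fix s assume "s \<in> S"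
  then show "(\<lambda>s\<in>S. \<phi> (n s)) s \<otimes>\<^bsub>M\<^esub> act (n s) ((\<lambda>s\<in>S. \<phi> (n s)) s)
      = (\<lambda>u\<in>Omega1. \<phi> u) (n s \<otimes>\<^bsub>W1\<^esub> n s)"
    using Z1_mult[OF \<phi>] by simp
next
  fix u s assume u: "u \<in> Omega1" and s: "s \<in> S"
  have "\<phi> u \<otimes>\<^bsub>M\<^esub> act u (\<phi> (n s)) = \<phi> (u \<otimes>\<^bsub>W1\<^esub> n s)"
    using u s Z1_mult[OF \<phi>] by simp
  also have "\<dots> = \<phi> (n (gen_conj u s) \<otimes>\<^bsub>W1\<^esub> slide u s)"
    using u s by (simp add: mult_n_eq_n_slide)
  also have "\<dots> = \<phi> (n (gen_conj u s)) \<otimes>\<^bsub>M\<^esub> act (n (gen_conj u s)) (\<phi> (slide u s))"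
    using u s Z1_mult[OF \<phi>] by simp
  finally show "(\<lambda>u\<in>Omega1. \<phi> u) u \<otimes>\<^bsub>M\<^esub> act u ((\<lambda>s\<in>S. \<phi> (n s)) s)
      = (\<lambda>s\<in>S. \<phi> (n s)) (gen_conj u s) \<otimes>\<^bsub>M\<^esub> act (n (gen_conj u s)) ((\<lambda>u\<in>Omega1. \<phi> u) (slide u s))"
    using u s by simp
next
  fix s t assume s: "s \<in> S" and t: "t \<in> S" and m: "mcox W s t \<noteq> 0"
  then show "sigma_word (\<lambda>s\<in>S. \<phi> (n s)) (alt s t (mcox W s t))
      = sigma_word (\<lambda>s\<in>S. \<phi> (n s)) (alt t s (mcox W s t))"
    using cocycle_nword[OF \<phi>] braid_n[OF s t m] set_alt_subset by metis
qed

section \<open>Extension of compatible pairs\<close>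

definition ext_value :: "('w \<Rightarrow> 'm) \<Rightarrow> ('g \<Rightarrow> 'm) \<Rightarrow> 'w list \<Rightarrow> 'g \<Rightarrow> 'm" where
  "ext_value \<sigma> \<rho> w u = sigma_word \<sigma> w \<otimes>\<^bsub>M\<^esub> act (nword w) (\<rho> u)"

definition extension :: "('w \<Rightarrow> 'm) \<Rightarrow> ('g \<Rightarrow> 'm) \<Rightarrow> 'g \<Rightarrow> 'm" where
  "extension \<sigma> \<rho> = (\<lambda>g\<in>carrier W1. SOME x. \<exists>w u. set w \<subseteq> S \<and> u \<in> Omega1 \<and>
     g = nword w \<otimes>\<^bsub>W1\<^esub> u \<and> x = ext_value \<sigma> \<rho> w u)"

context
  fixes \<sigma> :: "'w \<Rightarrow> 'm" and \<rho> :: "'g \<Rightarrow> 'm"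
  assumes compat: "compatible \<sigma> \<rho>"
begin

lemma sigma_closed: "\<sigma> \<in> S \<rightarrow> carrier M"
  using compat by (auto simp: compatible_def)

lemma rho_Z1: "\<rho> \<in> Z1 W1 Omega1 M act"
  using compat by (simp add: compatible_def)

lemma rho_closed [simp]: "u \<in> Omega1 \<Longrightarrow> \<rho> u \<in> carrier M"
  using Z1_closed[OF rho_Z1] .

lemma rho_mult: "u \<in> Omega1 \<Longrightarrow> v \<in> Omega1 \<Longrightarrow> \<rho> (u \<otimes>\<^bsub>W1\<^esub> v) = \<rho> u \<otimes>\<^bsub>M\<^esub> act u (\<rho> v)"
  using Z1_mult[OF rho_Z1] .

lemma rho_one [simp]: "\<rho> \<one>\<^bsub>W1\<^esub> = \<one>\<^bsub>M\<^esub>"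
  using Z1_one[OF rho_Z1] by simp

lemma sigma_n_square: "s \<in> S \<Longrightarrow> \<sigma> s \<otimes>\<^bsub>M\<^esub> act (n s) (\<sigma> s) = \<rho> (n s \<otimes>\<^bsub>W1\<^esub> n s)"
  using compat by (simp add: compatible_def)

lemma rho_slide:
  "u \<in> Omega1 \<Longrightarrow> s \<in> S \<Longrightarrow>
   \<rho> u \<otimes>\<^bsub>M\<^esub> act u (\<sigma> s) = \<sigma> (gen_conj u s) \<otimes>\<^bsub>M\<^esub> act (n (gen_conj u s)) (\<rho> (slide u s))"
  using compat by (simp add: compatible_def)

lemma sigma_word_braid:
  "s \<in> S \<Longrightarrow> t \<in> S \<Longrightarrow> mcox W s t \<noteq> 0 \<Longrightarrow>
   sigma_word \<sigma> (alt s t (mcox W s t)) = sigma_word \<sigma> (alt t s (mcox W s t))"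
  using compat unfolding compatible_def by blast

lemma ext_value_closed [simp]: "set w \<subseteq> S \<Longrightarrow> u \<in> Omega1 \<Longrightarrow> ext_value \<sigma> \<rho> w u \<in> carrier M"
  using sigma_closed by (simp add: ext_value_def)

lemma ext_value_Nil [simp]: "u \<in> Omega1 \<Longrightarrow> ext_value \<sigma> \<rho> [] u = \<rho> u"
  by (simp add: ext_value_def)

lemma ext_value_Cons:
  "s \<in> S \<Longrightarrow> set w \<subseteq> S \<Longrightarrow> u \<in> Omega1 \<Longrightarrow>
   ext_value \<sigma> \<rho> (s # w) u = \<sigma> s \<otimes>\<^bsub>M\<^esub> act (n s) (ext_value \<sigma> \<rho> w u)"
  using sigma_closed by (simp add: ext_value_def act_act M.m_assoc Pi_iff)

lemma ext_value_append:
  "set a \<subseteq> S \<Longrightarrow> set b \<subseteq> S \<Longrightarrow> u \<in> Omega1 \<Longrightarrow>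
   ext_value \<sigma> \<rho> (a @ b) u = sigma_word \<sigma> a \<otimes>\<^bsub>M\<^esub> act (nword a) (ext_value \<sigma> \<rho> b u)"
  using sigma_closed by (induction a) (auto simp: ext_value_Cons M.m_assoc act_act Pi_iff)

lemma ext_value_conj_word:
  assumes "set b \<subseteq> S" "u0 \<in> Omega1" "u1 \<in> Omega1" "u2 \<in> Omega1"
    and "u0 \<otimes>\<^bsub>W1\<^esub> nword b \<otimes>\<^bsub>W1\<^esub> u1 = nword (conj_word u0 b) \<otimes>\<^bsub>W1\<^esub> u2"
  shows "\<rho> u0 \<otimes>\<^bsub>M\<^esub> act u0 (ext_value \<sigma> \<rho> b u1) = ext_value \<sigma> \<rho> (conj_word u0 b) u2"
  using assms
proof (induction b arbitrary: u0)
  case Nil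
  then have "u2 = u0 \<otimes>\<^bsub>W1\<^esub> u1"
    by simp
  then show ?case
    using Nil by (simp add: rho_mult)
next
  case (Cons s b)
  define s' where "s' = gen_conj u0 s"
  define u0' where "u0' = slide u0 s"
  have s': "s' \<in> S" and u0': "u0' \<in> Omega1" and conj_eq: "gen_conj u0' = gen_conj u0"
    using Cons.prems by (simp_all add: s'_def u0'_def)
  have swap: "u0 \<otimes>\<^bsub>W1\<^esub> n s = n s' \<otimes>\<^bsub>W1\<^esub> u0'"
    using Cons.prems by (simp add: s'_def u0'_def mult_n_eq_n_slide)
  have c_closed: "nword (conj_word u0 b) \<in> carrier W1"
    using Cons.prems nword_closed[OF conj_word_subset[of u0 b]] by simp
  have "n s' \<otimes>\<^bsub>W1\<^esub> (u0' \<otimes>\<^bsub>W1\<^esub> nword b \<otimes>\<^bsub>W1\<^esub> u1)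
      = (n s' \<otimes>\<^bsub>W1\<^esub> u0') \<otimes>\<^bsub>W1\<^esub> nword b \<otimes>\<^bsub>W1\<^esub> u1"
    using Cons.prems(1-3) s' u0' by (simp add: W1.m_assoc)
  also have "\<dots> = u0 \<otimes>\<^bsub>W1\<^esub> nword (s # b) \<otimes>\<^bsub>W1\<^esub> u1"
    unfolding swap[symmetric] using Cons.prems(1-3) by (simp add: W1.m_assoc)
  also have "\<dots> = nword (conj_word u0 (s # b)) \<otimes>\<^bsub>W1\<^esub> u2"
    by (rule Cons.prems(5))
  also have "\<dots> = n s' \<otimes>\<^bsub>W1\<^esub> (nword (conj_word u0' b) \<otimes>\<^bsub>W1\<^esub> u2)"
    using Cons.prems(1,2,4) s' c_closed by (simp add: conj_eq s'_def W1.m_assoc)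
  finally have "u0' \<otimes>\<^bsub>W1\<^esub> nword b \<otimes>\<^bsub>W1\<^esub> u1 = nword (conj_word u0' b) \<otimes>\<^bsub>W1\<^esub> u2"
    by (rule W1.l_cancel)
      (use Cons.prems(1,3,4) s' u0' c_closed conj_eq in simp_all)
  then have IH: "\<rho> u0' \<otimes>\<^bsub>M\<^esub> act u0' (ext_value \<sigma> \<rho> b u1) = ext_value \<sigma> \<rho> (conj_word u0 b) u2"
    using Cons.IH[of u0'] Cons.prems(1,3,4) u0' conj_eq by simp
  have "\<rho> u0 \<otimes>\<^bsub>M\<^esub> act u0 (ext_value \<sigma> \<rho> (s # b) u1)
      = (\<rho> u0 \<otimes>\<^bsub>M\<^esub> act u0 (\<sigma> s)) \<otimes>\<^bsub>M\<^esub> act (u0 \<otimes>\<^bsub>W1\<^esub> n s) (ext_value \<sigma> \<rho> b u1)"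
    using Cons.prems sigma_closed by (simp add: ext_value_Cons act_act M.m_assoc Pi_iff)
  also have "\<dots> = \<sigma> s' \<otimes>\<^bsub>M\<^esub> act (n s') (\<rho> u0') \<otimes>\<^bsub>M\<^esub> act (n s' \<otimes>\<^bsub>W1\<^esub> u0') (ext_value \<sigma> \<rho> b u1)"
    using Cons.prems by (simp add: rho_slide swap s'_def u0'_def)
  also have "\<dots> = \<sigma> s' \<otimes>\<^bsub>M\<^esub> act (n s') (\<rho> u0' \<otimes>\<^bsub>M\<^esub> act u0' (ext_value \<sigma> \<rho> b u1))"
    using Cons.prems s' u0' sigma_closed by (simp add: act_act M.m_assoc Pi_iff)
  also have "\<dots> = ext_value \<sigma> \<rho> (conj_word u0 (s # b)) u2"
    using Cons.prems(1,2,4) s' conj_word_subset[of u0 b] by (simp add: IH ext_value_Cons s'_def)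
  finally show ?case .
qed

lemma ext_value_n_square:
  assumes "s \<in> S" "set b \<subseteq> S" "u \<in> Omega1" "u' \<in> Omega1"
    and "nword ([s, s] @ b) \<otimes>\<^bsub>W1\<^esub> u = nword b \<otimes>\<^bsub>W1\<^esub> u'"
  shows "ext_value \<sigma> \<rho> ([s, s] @ b) u = ext_value \<sigma> \<rho> b u'"
proof -
  define \<tau> where "\<tau> = n s \<otimes>\<^bsub>W1\<^esub> n s"
  have \<tau>: "\<tau> \<in> Omega1" and pi_\<tau>: "\<pi> \<tau> = \<one>\<^bsub>W\<^esub>"
    using assms(1) by (simp_all add: \<tau>_def)
  have conj_\<tau>: "conj_word \<tau> b = b"
    using conj_word_kernel[OF pi_\<tau> assms(2)] .
  have "nword ([s, s] @ b) = \<tau> \<otimes>\<^bsub>W1\<^esub> nword b"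
    using assms(1,2) by (simp add: \<tau>_def W1.m_assoc)
  then have "\<tau> \<otimes>\<^bsub>W1\<^esub> nword b \<otimes>\<^bsub>W1\<^esub> u = nword (conj_word \<tau> b) \<otimes>\<^bsub>W1\<^esub> u'"
    unfolding conj_\<tau> using assms(5) by simp
  then have "\<rho> \<tau> \<otimes>\<^bsub>M\<^esub> act \<tau> (ext_value \<sigma> \<rho> b u) = ext_value \<sigma> \<rho> b u'"
    using ext_value_conj_word[OF assms(2) \<tau> assms(3,4)] conj_\<tau> by simp
  moreover have "ext_value \<sigma> \<rho> ([s, s] @ b) u = \<rho> \<tau> \<otimes>\<^bsub>M\<^esub> act \<tau> (ext_value \<sigma> \<rho> b u)"
    using assms(1-3) sigma_closed
    by (simp add: ext_value_Cons \<tau>_def sigma_n_square[symmetric] act_act M.m_assoc Pi_iff)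
  ultimately show ?thesis
    by simp
qed

lemma ext_value_braid:
  assumes "s \<in> S" "t \<in> S" "mcox W s t \<noteq> 0" "set b \<subseteq> S" "u \<in> Omega1" "u' \<in> Omega1"
    and "nword (alt s t (mcox W s t) @ b) \<otimes>\<^bsub>W1\<^esub> u = nword (alt t s (mcox W s t) @ b) \<otimes>\<^bsub>W1\<^esub> u'"
  shows "ext_value \<sigma> \<rho> (alt s t (mcox W s t) @ b) u = ext_value \<sigma> \<rho> (alt t s (mcox W s t) @ b) u'"
proof -
  let ?x = "alt s t (mcox W s t)" and ?y = "alt t s (mcox W s t)"
  have words: "set ?x \<subseteq> S" "set ?y \<subseteq> S"
    using assms(1,2) by (simp_all add: set_alt_subset)
  have nword_eq: "nword ?x = nword ?y"
    using braid_n[OF assms(1-3)] .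
  have "u = u'"
    using assms(4-7) words by (simp add: nword_append nword_eq del: map_append)
  then show ?thesis
    using assms(4,5) words by (simp add: ext_value_append nword_eq sigma_word_braid[OF assms(1-3)])
qed

lemma ext_value_append_cong:
  assumes "set a \<subseteq> S" "set x \<subseteq> S" "set y \<subseteq> S" "u \<in> Omega1" "u' \<in> Omega1"
    and "nword (a @ x) \<otimes>\<^bsub>W1\<^esub> u = nword (a @ y) \<otimes>\<^bsub>W1\<^esub> u'"
    and "nword x \<otimes>\<^bsub>W1\<^esub> u = nword y \<otimes>\<^bsub>W1\<^esub> u' \<Longrightarrow> ext_value \<sigma> \<rho> x u = ext_value \<sigma> \<rho> y u'"
  shows "ext_value \<sigma> \<rho> (a @ x) u = ext_value \<sigma> \<rho> (a @ y) u'"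
proof -
  have "nword a \<otimes>\<^bsub>W1\<^esub> (nword x \<otimes>\<^bsub>W1\<^esub> u) = nword a \<otimes>\<^bsub>W1\<^esub> (nword y \<otimes>\<^bsub>W1\<^esub> u')"
    using assms(1-6) by (simp add: nword_append W1.m_assoc del: map_append)
  then have "nword x \<otimes>\<^bsub>W1\<^esub> u = nword y \<otimes>\<^bsub>W1\<^esub> u'"
    by (rule W1.l_cancel) (use assms(1-5) in simp_all)
  then show ?thesis
    using assms(1-5,7) by (simp add: ext_value_append)
qed

lemma ext_value_cox_equiv:
  assumes "cox_equiv Waff_group S w w'" "set w \<subseteq> S" "u \<in> Omega1" "u' \<in> Omega1"
    and "nword w \<otimes>\<^bsub>W1\<^esub> u = nword w' \<otimes>\<^bsub>W1\<^esub> u'"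
  shows "ext_value \<sigma> \<rho> w u = ext_value \<sigma> \<rho> w' u'"
  using assms
proof (induction arbitrary: u u' rule: cox_equiv.induct)
  case (refl w)
  then have "u = u'"
    by (simp add: W1.l_cancel)
  then show ?case
    by simp
next
  case (sym w w')
  then show ?case
    using cox_equiv_set_subset by metis
next
  case (trans w1 w2 w3)
  have w2: "set w2 \<subseteq> S"
    using trans.prems(1) trans.hyps(1) cox_equiv_set_subset by blast
  have "mprod W w1 = mprod W w2"
    using trans.hyps(1) trans.prems(1) w2 coxeter_eq_iff_cox_equiv[OF coxeter_Waff] by simp
  then have v: "inv\<^bsub>W1\<^esub> (nword w2) \<otimes>\<^bsub>W1\<^esub> nword w1 \<otimes>\<^bsub>W1\<^esub> u \<in> Omega1"
    using Omega1_transfer trans.prems(1,2) w2 by blast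
  have step: "nword w1 \<otimes>\<^bsub>W1\<^esub> u = nword w2 \<otimes>\<^bsub>W1\<^esub> (inv\<^bsub>W1\<^esub> (nword w2) \<otimes>\<^bsub>W1\<^esub> nword w1 \<otimes>\<^bsub>W1\<^esub> u)"
    using trans.prems(1,2) w2 by (simp add: W1.m_assoc[symmetric])
  show ?case
    using trans.IH(1)[OF trans.prems(1,2) v step] trans.IH(2)[OF w2 v trans.prems(3)]
      step trans.prems(4) by simp
next
  case (del s a b)
  then show ?case
    using ext_value_n_square by (intro ext_value_append_cong) auto
next
  case (braid s t a b)
  moreover have "set (alt s t (mcox W s t)) \<subseteq> S" "set (alt t s (mcox W s t)) \<subseteq> S"
    using braid.hyps(1,2) by (simp_all add: set_alt_subset)
  ultimately show ?case
    using ext_value_braid by (intro ext_value_append_cong) auto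
qed

lemma ext_value_well_defined:
  assumes "set w \<subseteq> S" "set w' \<subseteq> S" "u \<in> Omega1" "u' \<in> Omega1"
    and "nword w \<otimes>\<^bsub>W1\<^esub> u = nword w' \<otimes>\<^bsub>W1\<^esub> u'"
  shows "ext_value \<sigma> \<rho> w u = ext_value \<sigma> \<rho> w' u'"
  using ext_value_cox_equiv[OF nword_Omega1_eq_imp_cox_equiv[OF assms]] assms by simp

lemma extension_eq:
  assumes "set w \<subseteq> S" "u \<in> Omega1"
  shows "extension \<sigma> \<rho> (nword w \<otimes>\<^bsub>W1\<^esub> u) = ext_value \<sigma> \<rho> w u"
proof -
  let ?P = "\<lambda>x. \<exists>w' u'. set w' \<subseteq> S \<and> u' \<in> Omega1 \<and> nword w \<otimes>\<^bsub>W1\<^esub> u = nword w' \<otimes>\<^bsub>W1\<^esub> u'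
     \<and> x = ext_value \<sigma> \<rho> w' u'"
  have "?P (ext_value \<sigma> \<rho> w u)"
    using assms by blast
  then have "?P (SOME x. ?P x)"
    by (rule someI)
  then obtain w' u' where w': "set w' \<subseteq> S" "u' \<in> Omega1"
    "nword w \<otimes>\<^bsub>W1\<^esub> u = nword w' \<otimes>\<^bsub>W1\<^esub> u'" and some: "(SOME x. ?P x) = ext_value \<sigma> \<rho> w' u'"
    by blast
  have "(SOME x. ?P x) = ext_value \<sigma> \<rho> w u"
    unfolding some using ext_value_well_defined[OF assms(1) w'(1) assms(2) w'(2,3)] by simp
  moreover have "nword w \<otimes>\<^bsub>W1\<^esub> u \<in> carrier W1"
    using assms by simp
  ultimately show ?thesis
    unfolding extension_def by simp
qed

lemma extension_in_Z1: "extension \<sigma> \<rho> \<in> Z1 W1 (carrier W1) M act"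
proof -
  have closed: "extension \<sigma> \<rho> g \<in> carrier M" if "g \<in> carrier W1" for g
    using that by (rule Omega1_decomposition) (simp add: extension_eq)
  have "extension \<sigma> \<rho> (g \<otimes>\<^bsub>W1\<^esub> g') = extension \<sigma> \<rho> g \<otimes>\<^bsub>M\<^esub> act g (extension \<sigma> \<rho> g')"
    if carrier: "g \<in> carrier W1" "g' \<in> carrier W1" for g g'
  proof -
    obtain w u where w: "set w \<subseteq> S" and u: "u \<in> Omega1" and g: "g = nword w \<otimes>\<^bsub>W1\<^esub> u"
      using carrier(1) by (rule Omega1_decomposition)
    obtain w' u' where w': "set w' \<subseteq> S" and u': "u' \<in> Omega1" and g': "g' = nword w' \<otimes>\<^bsub>W1\<^esub> u'"
      using carrier(2) by (rule Omega1_decomposition)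
    let ?c = "conj_word u w'"
    obtain v where v: "v \<in> Omega1" and pass: "u \<otimes>\<^bsub>W1\<^esub> nword w' = nword ?c \<otimes>\<^bsub>W1\<^esub> v"
      using Omega1_pass_word[OF u w'] .
    have c: "set ?c \<subseteq> S"
      using conj_word_subset[OF u w'] .
    have pass': "u \<otimes>\<^bsub>W1\<^esub> nword w' \<otimes>\<^bsub>W1\<^esub> u' = nword ?c \<otimes>\<^bsub>W1\<^esub> (v \<otimes>\<^bsub>W1\<^esub> u')"
      using u v u' nword_closed[OF c] w' by (simp add: pass W1.m_assoc)
    then have twist: "\<rho> u \<otimes>\<^bsub>M\<^esub> act u (ext_value \<sigma> \<rho> w' u') = ext_value \<sigma> \<rho> ?c (v \<otimes>\<^bsub>W1\<^esub> u')"
      using ext_value_conj_word[OF w' u u'] u' v by simp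
    have "g \<otimes>\<^bsub>W1\<^esub> g' = nword (w @ ?c) \<otimes>\<^bsub>W1\<^esub> (v \<otimes>\<^bsub>W1\<^esub> u')"
      using w u w' u' v c nword_closed[OF c] pass'
      by (simp add: g g' nword_append W1.m_assoc del: map_append)
    then have "extension \<sigma> \<rho> (g \<otimes>\<^bsub>W1\<^esub> g') = sigma_word \<sigma> w \<otimes>\<^bsub>M\<^esub> act (nword w) (ext_value \<sigma> \<rho> ?c (v \<otimes>\<^bsub>W1\<^esub> u'))"
      using w c u' v by (simp add: extension_eq ext_value_append del: map_append)
    also have "\<dots> = sigma_word \<sigma> w \<otimes>\<^bsub>M\<^esub> act (nword w) (\<rho> u \<otimes>\<^bsub>M\<^esub> act u (ext_value \<sigma> \<rho> w' u'))"
      by (simp only: twist)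
    also have "\<dots> = ext_value \<sigma> \<rho> w u \<otimes>\<^bsub>M\<^esub> act g (ext_value \<sigma> \<rho> w' u')"
      using w u w' u' sigma_closed
      by (simp add: g ext_value_def[of \<sigma> \<rho> w u] act_act M.m_assoc)
    finally show ?thesis
      using w u w' u' by (simp add: g g' extension_eq)
  qed
  moreover have "extension \<sigma> \<rho> \<in> extensional (carrier W1)"
    by (simp add: extension_def)
  ultimately show ?thesis
    using closed by (simp add: Z1_def PiE_def Pi_iff)
qed

lemma restriction_extension: "restriction (extension \<sigma> \<rho>) = (\<sigma>, \<rho>)"
proof -
  have "(\<lambda>s\<in>S. extension \<sigma> \<rho> (n s)) = \<sigma>"
  proof
    fix s
    show "(\<lambda>s\<in>S. extension \<sigma> \<rho> (n s)) s = \<sigma> s"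
    proof (cases "s \<in> S")
      case True
      then show ?thesis
        using extension_eq[of "[s]" "\<one>\<^bsub>W1\<^esub>"] sigma_closed by (simp add: ext_value_def Pi_iff)
    next
      case False
      then show ?thesis
        using compat by (simp add: compatible_def PiE_def extensional_def)
    qed
  qed
  moreover have "(\<lambda>u\<in>Omega1. extension \<sigma> \<rho> u) = \<rho>"
  proof
    fix u
    show "(\<lambda>u\<in>Omega1. extension \<sigma> \<rho> u) u = \<rho> u"
      using extension_eq[of "[]" u] rho_Z1 by (auto simp: Z1_def PiE_def extensional_def)
  qed
  ultimately show ?thesis
    by (simp add: restriction_def)
qed

end

theorem restriction_image: "restriction ` Z1 W1 (carrier W1) M act = {(\<sigma>, \<rho>). compatible \<sigma> \<rho>}"
proof
  show "restriction ` Z1 W1 (carrier W1) M act \<subseteq> {(\<sigma>, \<rho>). compatible \<sigma> \<rho>}"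
    using compatible_restriction by (auto simp: restriction_def)
  show "{(\<sigma>, \<rho>). compatible \<sigma> \<rho>} \<subseteq> restriction ` Z1 W1 (carrier W1) M act"
    using restriction_extension extension_in_Z1 by (auto intro!: image_eqI[where x = "extension _ _"])
qed

end

theorem lemma2p2p1:
  fixes W1 :: "('g, 'c) monoid_scheme" and W :: "('w, 'd) monoid_scheme"
    and M :: "('m, 'e) monoid_scheme"
    and Waff S \<Omega> :: "'w set" and T :: "'g set"
    and \<pi> :: "'g \<Rightarrow> 'w" and n :: "'w \<Rightarrow> 'g" and act :: "'g \<Rightarrow> 'm \<Rightarrow> 'm"
  assumes "pro_p_coxeter W1 W Waff S \<Omega> T \<pi> n"
    and "group M"
    and "aut_action W1 M act"
  defines "\<Omega>1 \<equiv> {g \<in> carrier W1. \<pi> g \<in> \<Omega>}"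
  defines "res \<equiv> (\<lambda>\<phi>. ((\<lambda>s\<in>S. \<phi> (n s)), (\<lambda>u\<in>\<Omega>1. \<phi> u)))"
  shows "inj_on res (Z1 W1 (carrier W1) M act) \<and>
    res ` Z1 W1 (carrier W1) M act =
      {(\<sigma>, \<rho>). \<sigma> \<in> S \<rightarrow>\<^sub>E carrier M \<and> \<rho> \<in> Z1 W1 \<Omega>1 M act \<and>
        (\<forall>s\<in>S. \<sigma> s \<otimes>\<^bsub>M\<^esub> act (n s) (\<sigma> s) = \<rho> (n s \<otimes>\<^bsub>W1\<^esub> n s)) \<and>
        (\<forall>u\<in>\<Omega>1. \<forall>s\<in>S.
           (let us = \<pi> u \<otimes>\<^bsub>W\<^esub> s \<otimes>\<^bsub>W\<^esub> inv\<^bsub>W\<^esub> (\<pi> u);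
                tsu = inv\<^bsub>W1\<^esub> u \<otimes>\<^bsub>W1\<^esub> inv\<^bsub>W1\<^esub> (n us) \<otimes>\<^bsub>W1\<^esub> u \<otimes>\<^bsub>W1\<^esub> n s
            in \<rho> u \<otimes>\<^bsub>M\<^esub> act u (\<sigma> s)
                 = \<sigma> us \<otimes>\<^bsub>M\<^esub> act (n us) (\<rho> (u \<otimes>\<^bsub>W1\<^esub> tsu)))) \<and>
        (\<forall>s\<in>S. \<forall>t\<in>S. mcox W s t \<noteq> 0 \<longrightarrow>
           mprod M (map (\<lambda>k. act (mprod W1 (map n (take k (alt s t (mcox W s t)))))
                                 (\<sigma> (alt s t (mcox W s t) ! k))) [0..<mcox W s t])
         = mprod M (map (\<lambda>k. act (mprod W1 (map n (take k (alt t s (mcox W s t)))))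
                                 (\<sigma> (alt t s (mcox W s t) ! k))) [0..<mcox W s t]))}"
proof -
  interpret pro_p_coxeter_action W1 W Waff S \<Omega> T \<pi> n M act
    using assms(1-3) by (rule pro_p_coxeter_action.intro)
  have \<Omega>1: "\<Omega>1 = Omega1"
    unfolding \<Omega>1_def Omega1_def ..
  have res: "res = restriction"
    unfolding res_def restriction_def \<Omega>1 ..
  show ?thesis
    unfolding res \<Omega>1 restriction_image compatible_iff[abs_def]
    using restriction_inj by (rule conjI) (rule HOL.refl) \<comment> \<open>plain refl is cox_equiv.refl here\<close>
qed

end
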